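(* Let $\mu\in\rho(A_{22})$. For every $x_+\in\mathcal D^+$ the vector $y=(x_+,-F(\mu)x_+)^T$ lies in $\mathcal D(A)$ and $$(S(\mu)x_+,x_+)=(JAy,y)+\mu\,(F(\mu)x_+,F(\mu)x_+).$$ In particular, if $A$ is $J$-dissipative, then for every $\mu\in\mathbb C^-\cap\rho(A_{22})$ the operator $S(\mu)$ with domain $\mathcal D^+$ is dissipative in $\mathcal H^+$. Moreover, if $\mathcal D(A)$ is dense, $-A_{22}$ is m-dissipative in $\mathcal H^-$ and, for some $\mu\in\mathbb C^-$, $F(\mu)$ and $G(\mu)$ are bounded, then the closure of $S(\mu)$ is m-dissipative in $\mathcal H^+$ if and only if the closure of $A$ is $J$-m-dissipative.
   Context: $\mathcal H$ is a separable Hilbert space with complementary orthogonal projections $P_\pm$, $J=P_+-P_-$, $\mathcal H^\pm=P_\pm\mathcal H$, $[x,y]=(Jx,y)$; vectors are written as columns $(x_+,x_-)^T$. $A$ is a linear operator with domain $\mathcal D(A)=\mathcal D^+\oplus\mathcal D^-$, $\mathcal D^\pm\subset\mathcal H^\pm$, with $A_{11}=P_+A|_{\mathcal D^+}$, $A_{12}=P_+A|_{\mathcal D^-}$, $A_{21}=P_-A|_{\mathcal D^+}$, $A_{22}=P_-A|_{\mathcal D^-}$ ($A_{22}$ an operator in $\mathcal H^-$ with domain $\mathcal D^-$). For $\mu\in\rho(A_{22})$: $F(\mu)=(A_{22}-\mu)^{-1}A_{21}$ on $\mathcal D^+$, $G(\mu)=A_{12}(A_{22}-\mu)^{-1}$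 on $\mathcal H^-$, $S(\mu)=A_{11}-A_{12}F(\mu)$ on $\mathcal D^+$. An operator $T$ is dissipative if $\operatorname{Re}(Tx,x)\le0$ on $\mathcal D(T)$, m-dissipative if moreover it has no proper dissipative extension (equivalently $T-\lambda$ is boundedly invertible for $\operatorname{Re}\lambda>0$). $A$ is $J$-dissipative ($J$-m-dissipative) if $JA$ is dissipative (m-dissipative). $\mathbb C^-=\{\operatorname{Re}\mu<0\}$. *)

theory Defs
  imports "HOL-Analysis.Analysis"
begin

class complex_inner = real_normed_vector +
  fixes scaleC :: "complex \<Rightarrow> 'a \<Rightarrow> 'a"
    and cinner :: "'a \<Rightarrow> 'a \<Rightarrow> complex"
  assumes scaleC_add_right: "scaleC a (x + y) = scaleC a x + scaleC a y"
    and scaleC_add_left: "scaleC (a + b) x = scaleC a x + scaleC b x"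
    and scaleC_scaleC: "scaleC a (scaleC b x) = scaleC (a * b) x"
    and scaleC_one: "scaleC 1 x = x"
    and scaleR_scaleC: "scaleR r x = scaleC (complex_of_real r) x"
    and cinner_commute: "cinner x y = cnj (cinner y x)"
    and cinner_add_left: "cinner (x + y) z = cinner x z + cinner y z"
    and cinner_scaleC_left: "cinner (scaleC a x) y = a * cinner x y"
    and cinner_self_nonneg: "0 \<le> Re (cinner x x)"
    and cinner_self_eq_zero: "cinner x x = 0 \<longleftrightarrow> x = 0"
    and norm_eq_sqrt_cinner: "norm x = sqrt (Re (cinner x x))"

class chilbert_space = complex_inner + complete_space

instantiation complex :: complex_inner
begin
definition scaleC_complex :: "complex \<Rightarrow> complex \<Rightarrow> complex" where "scaleC_complex a x = a * x"
definition cinner_complex :: "complex \<Rightarrow> complex \<Rightarrow> complex" where "cinner_complex x y = x * cnj y"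
instance
proof
  fix a b :: complex and x y z :: complex and r :: real
  show "scaleC a (x + y) = scaleC a x + scaleC a y" by (simp add: scaleC_complex_def distrib_left)
  show "scaleC (a + b) x = scaleC a x + scaleC b x" by (simp add: scaleC_complex_def distrib_right)
  show "scaleC a (scaleC b x) = scaleC (a * b) x" by (simp add: scaleC_complex_def)
  show "scaleC 1 x = x" by (simp add: scaleC_complex_def)
  show "r *\<^sub>R x = scaleC (complex_of_real r) x" by (simp add: scaleC_complex_def scaleR_conv_of_real)
  show "cinner x y = cnj (cinner y x)" by (simp add: cinner_complex_def)
  show "cinner (x + y) z = cinner x z + cinner y z" by (simp add: cinner_complex_def distrib_right)
  show "cinner (scaleC a x) y = a * cinner x y" by (simp add: cinner_complex_def scaleC_complex_def)
  show "0 \<le> Re (cinner x x)" by (simp add: cinner_complex_def complex_mult_cnj)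
  show "cinner x x = 0 \<longleftrightarrow> x = 0" by (simp add: cinner_complex_def)
  show "norm x = sqrt (Re (cinner x x))" by (simp add: cinner_complex_def complex_mult_cnj cmod_def)
qed
end

instance complex :: chilbert_space ..

definition clinear_on :: "'a::complex_inner set \<Rightarrow> ('a \<Rightarrow> 'b::complex_inner) \<Rightarrow> bool" where
  "clinear_on D f \<longleftrightarrow> (\<forall>x\<in>D. \<forall>y\<in>D. f (x + y) = f x + f y) \<and>
                      (\<forall>c. \<forall>x\<in>D. f (scaleC c x) = scaleC c (f x))"

definition csubspace :: "'a::complex_inner set \<Rightarrow> bool" where
  "csubspace V \<longleftrightarrow> 0 \<in> V \<and> (\<forall>x\<in>V. \<forall>y\<in>V. x + y \<in> V) \<and> (\<forall>c. \<forall>x\<in>V. scaleC c x \<in> V)"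

definition orth_proj :: "('a::complex_inner \<Rightarrow> 'a) \<Rightarrow> bool" where
  "orth_proj P \<longleftrightarrow> clinear_on UNIV P \<and> (\<forall>x. P (P x) = P x) \<and>
                   (\<forall>x y. cinner (P x) y = cinner x (P y))"

text \<open>Operators (possibly after taking closures) are represented by their graphs.\<close>
definition graph :: "'a set \<Rightarrow> ('a \<Rightarrow> 'b) \<Rightarrow> ('a \<times> 'b) set" where
  "graph D f = {(x, f x) | x. x \<in> D}"

definition is_operator :: "('a::complex_inner \<times> 'a) set \<Rightarrow> bool" where
  "is_operator T \<longleftrightarrow> (0, 0) \<in> T \<and>
     (\<forall>p\<in>T. \<forall>q\<in>T. (fst p + fst q, snd p + snd q) \<in> T) \<and>
     (\<forall>c. \<forall>p\<in>T. (scaleC c (fst p), scaleC c (snd p)) \<in> T) \<and>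
     (\<forall>x y z. (x, y) \<in> T \<longrightarrow> (x, z) \<in> T \<longrightarrow> y = z)"

definition dissipative :: "('a::complex_inner \<times> 'a) set \<Rightarrow> bool" where
  "dissipative T \<longleftrightarrow> (\<forall>(x, y)\<in>T. Re (cinner y x) \<le> 0)"

definition m_dissipative_in :: "'a::complex_inner set \<Rightarrow> ('a \<times> 'a) set \<Rightarrow> bool" where
  "m_dissipative_in X T \<longleftrightarrow> T \<subseteq> X \<times> X \<and> is_operator T \<and> dissipative T \<and>
     (\<forall>T'. T \<subseteq> T' \<and> T' \<subseteq> X \<times> X \<and> is_operator T' \<and> dissipative T' \<longrightarrow> T' = T)"

definition resolvent_set :: "'a::complex_inner set \<Rightarrow> 'a set \<Rightarrow> ('a \<Rightarrow> 'a) \<Rightarrow> complex set" where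
  "resolvent_set X D T = {\<mu>. bij_betw (\<lambda>x. T x - scaleC \<mu> x) D X \<and>
      (\<exists>C. \<forall>y\<in>X. norm (inv_into D (\<lambda>x. T x - scaleC \<mu> x) y) \<le> C * norm y)}"

definition resolvent :: "'a::complex_inner set \<Rightarrow> ('a \<Rightarrow> 'a) \<Rightarrow> complex \<Rightarrow> 'a \<Rightarrow> 'a" where
  "resolvent D T \<mu> = inv_into D (\<lambda>x. T x - scaleC \<mu> x)"

end

theory Submission
  imports Defs
begin

text \<open>
  For x in D+ the vector u = F(\<mu>)x solves (A22 - \<mu>)u = A21 x, so JA(x - u) has the
  components S(\<mu>)x and \<mu>u. Since u is orthogonal to H+, pairing with x - u gives the
  identity, and dissipativity of S(\<mu>) follows from Re \<mu> |u|^2 \<le> 0.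

  For the equivalence, the closure of a densely defined dissipative operator T is again an
  operator, and it is m-dissipative (that is, maximal) exactly when T - \<lambda> has dense range
  for some Re \<lambda> > 0: a vector orthogonal to a proper closed range could be adjoined to T
  without losing dissipativity. The same argument makes \<mu> a regular point of A22 when -A22 is
  m-dissipative. Every x in D(A) has the form x+ - F(\<mu>)x+ - (A22 - \<mu>)^-1 g with x+ in D+
  and g in H-, and then (JA + \<mu>)x = ((S(\<mu>) + \<mu>)x+ - G(\<mu>)g) + g is an orthogonal
  decomposition. Hence JA + \<mu> has dense range iff S(\<mu>) + \<mu> has, the bound on G(\<mu>)
  controlling the error term.
\<close>

section \<open>Complex inner product spaces\<close>

global_interpretation complex_vector: module "scaleC :: complex \<Rightarrow> 'a \<Rightarrow> 'a::complex_inner"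
  by standard (simp_all add: scaleC_add_right scaleC_add_left scaleC_scaleC scaleC_one)

lemma cinner_add_right: "cinner x (y + z) = cinner x y + cinner x z"
  by (metis cinner_commute cinner_add_left complex_cnj_add)

lemma cinner_scaleC_right: "cinner x (scaleC a y) = cnj a * cinner x y"
  by (metis cinner_commute cinner_scaleC_left complex_cnj_mult)

lemma cinner_zero_left [simp]: "cinner 0 y = 0"
  using cinner_scaleC_left[of 0 0 y] by simp

lemma cinner_zero_right [simp]: "cinner x 0 = 0"
  using cinner_scaleC_right[of x 0 0] by simp

lemma cinner_minus_left: "cinner (- x) y = - cinner x y"
  using cinner_scaleC_left[of "-1" x y] by simp

lemma cinner_minus_right: "cinner x (- y) = - cinner x y"
  using cinner_scaleC_right[of x "-1" y] by simp

lemma cinner_diff_left: "cinner (x - y) z = cinner x z - cinner y z"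
  using cinner_add_left[of x "-y" z] by (simp add: cinner_minus_left)

lemma cinner_diff_right: "cinner x (y - z) = cinner x y - cinner x z"
  using cinner_add_right[of x y "-z"] by (simp add: cinner_minus_right)

lemmas cinner_simps = cinner_add_left cinner_add_right cinner_diff_left cinner_diff_right
  cinner_minus_left cinner_minus_right cinner_scaleC_left cinner_scaleC_right

lemma power2_norm_eq_cinner: "(norm x)^2 = Re (cinner x x)"
  by (simp add: norm_eq_sqrt_cinner cinner_self_nonneg)

lemma cinner_self_norm: "cinner x x = complex_of_real ((norm x)^2)"
proof -
  have "cnj (cinner x x) = cinner x x"
    by (metis cinner_commute)
  then have "Im (cinner x x) = 0"
    by (simp add: complex_eq_iff)
  then show ?thesis by (simp add: complex_eq_iff power2_norm_eq_cinner)
qed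

lemma Re_cinner_commute: "Re (cinner x y) = Re (cinner y x)"
  by (subst cinner_commute) simp

lemma norm_add_square: "(norm (x + y))^2 = (norm x)^2 + 2 * Re (cinner x y) + (norm y)^2"
  by (simp add: power2_norm_eq_cinner cinner_simps Re_cinner_commute[of y x])

lemma norm_diff_square: "(norm (x - y))^2 = (norm x)^2 - 2 * Re (cinner x y) + (norm y)^2"
  by (simp add: power2_norm_eq_cinner cinner_simps Re_cinner_commute[of y x])

lemma parallelogram_law:
  fixes x y :: "'a::complex_inner"
  shows "(norm (x + y))^2 + (norm (x - y))^2 = 2 * (norm x)^2 + 2 * (norm y)^2"
  by (simp add: norm_add_square norm_diff_square)

lemma norm_scaleC: "norm (scaleC c x) = cmod c * norm x"
proof -
  have "cinner (scaleC c x) (scaleC c x) = (c * cnj c) * cinner x x"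
    by (simp add: cinner_simps mult.assoc)
  also have "\<dots> = complex_of_real ((cmod c * norm x)^2)"
    by (simp add: complex_norm_square[symmetric] cinner_self_norm power_mult_distrib)
  finally have "(norm (scaleC c x))^2 = (cmod c * norm x)^2"
    by (simp add: power2_norm_eq_cinner)
  then show ?thesis by (simp add: power2_eq_iff_nonneg)
qed

lemma norm_cinner_le: "cmod (cinner x y) \<le> norm x * norm y"
proof (cases "y = 0")
  case False
  define a where "a = cinner x y"
  define t where "t = a / complex_of_real ((norm y)^2)"
  define q where "q = (cmod a)^2 / (norm y)^2"
  have ny: "norm y > 0" using False by simp
  have "Re (cnj t * a) = q"
    unfolding t_def q_def by (simp add: complex_norm_square[symmetric] mult.commute)
  moreover have "(cmod t)^2 * (norm y)^2 = q"
  proof -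
    have "cmod t = cmod a / (norm y)^2"
      unfolding t_def by (simp add: norm_divide norm_power)
    then show ?thesis
      using ny unfolding q_def by (simp add: power_divide power2_eq_square)
  qed
  moreover have "(norm (x - scaleC t y))^2
      = (norm x)^2 - 2 * Re (cnj t * a) + (cmod t)^2 * (norm y)^2"
    by (simp add: norm_diff_square cinner_simps norm_scaleC power_mult_distrib a_def)
  ultimately have "q * (norm y)^2 \<le> (norm x)^2 * (norm y)^2"
    using zero_le_power2[of "norm (x - scaleC t y)"] by (intro mult_right_mono) simp_all
  moreover have "q * (norm y)^2 = (cmod a)^2" unfolding q_def using ny by simp
  ultimately have "(cmod a)^2 \<le> (norm x * norm y)^2" by (simp add: power_mult_distrib)
  then show ?thesis unfolding a_def by (rule power2_le_imp_le) simp
qed simp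

lemma bounded_bilinear_cinner: "bounded_bilinear cinner"
proof
  fix a a' b b' :: 'a and r :: real
  show "cinner (a + a') b = cinner a b + cinner a' b" by (rule cinner_add_left)
  show "cinner a (b + b') = cinner a b + cinner a b'" by (rule cinner_add_right)
  show "cinner (r *\<^sub>R a) b = r *\<^sub>R cinner a b"
    by (simp add: scaleR_scaleC cinner_scaleC_left scaleC_complex_def)
  show "cinner a (r *\<^sub>R b) = r *\<^sub>R cinner a b"
    by (simp add: scaleR_scaleC cinner_scaleC_right scaleC_complex_def)
  show "\<exists>K. \<forall>a b::'a. norm (cinner a b) \<le> norm a * norm b * K"
    by (intro exI[of _ 1]) (simp add: norm_cinner_le)
qed

lemma bounded_linear_scaleC: "bounded_linear (scaleC c)"
proof
  fix x y :: 'a and r :: real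
  show "scaleC c (x + y) = scaleC c x + scaleC c y" by (rule scaleC_add_right)
  show "scaleC c (r *\<^sub>R x) = r *\<^sub>R scaleC c x"
    by (simp add: scaleR_scaleC mult.commute)
  show "\<exists>K. \<forall>x. norm (scaleC c x) \<le> norm x * K"
    by (intro exI[of _ "cmod c"]) (simp add: norm_scaleC mult.commute)
qed

lemmas continuous_on_cinner [continuous_intros] =
  bounded_bilinear.continuous_on[OF bounded_bilinear_cinner]
lemmas tendsto_scaleC [tendsto_intros] = bounded_linear.tendsto[OF bounded_linear_scaleC]
lemmas continuous_on_scaleC [continuous_intros] =
  bounded_linear.continuous_on[OF bounded_linear_scaleC]

lemma norm_le_norm_add_orthogonal:
  assumes "cinner p q = 0"
  shows "norm p \<le> norm (p + q)" "norm q \<le> norm (p + q)"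
proof -
  have "(norm (p + q))^2 = (norm p)^2 + (norm q)^2" using assms by (simp add: norm_add_square)
  then show "norm p \<le> norm (p + q)" "norm q \<le> norm (p + q)"
    by (auto intro: power2_le_imp_le)
qed

lemma csubspace_0: "csubspace V \<Longrightarrow> 0 \<in> V"
  unfolding csubspace_def by blast

lemma csubspace_add: "csubspace V \<Longrightarrow> x \<in> V \<Longrightarrow> y \<in> V \<Longrightarrow> x + y \<in> V"
  unfolding csubspace_def by blast

lemma csubspace_scaleC: "csubspace V \<Longrightarrow> x \<in> V \<Longrightarrow> scaleC c x \<in> V"
  unfolding csubspace_def by blast

lemma csubspace_diff: "csubspace V \<Longrightarrow> x \<in> V \<Longrightarrow> y \<in> V \<Longrightarrow> x - y \<in> V"
  using csubspace_add[of V x "scaleC (-1) y"] csubspace_scaleC[of V y "-1"] by simp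

lemma csubspace_UNIV: "csubspace UNIV"
  unfolding csubspace_def by simp

lemma clinear_onD_add: "clinear_on D f \<Longrightarrow> x \<in> D \<Longrightarrow> y \<in> D \<Longrightarrow> f (x + y) = f x + f y"
  unfolding clinear_on_def by blast

lemma clinear_onD_scaleC: "clinear_on D f \<Longrightarrow> x \<in> D \<Longrightarrow> f (scaleC c x) = scaleC c (f x)"
  unfolding clinear_on_def by blast

lemma clinear_onD_diff:
  assumes "clinear_on D f" "csubspace D" "x \<in> D" "y \<in> D"
  shows "f (x - y) = f x - f y"
  using clinear_onD_add[OF assms(1,3), of "scaleC (-1) y"] clinear_onD_scaleC[OF assms(1,4), of "-1"]
    csubspace_scaleC[OF assms(2,4), of "-1"]
  by simp

lemma clinear_onD_zero: "clinear_on D f \<Longrightarrow> csubspace D \<Longrightarrow> f 0 = 0"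
  using clinear_onD_scaleC[of D f 0 0] csubspace_0[of D] by simp

lemma clinear_on_compose:
  "clinear_on D f \<Longrightarrow> clinear_on UNIV g \<Longrightarrow> clinear_on D (\<lambda>x. g (f x))"
  unfolding clinear_on_def by simp

section \<open>Orthogonal projections\<close>

context
  fixes P :: "'a::complex_inner \<Rightarrow> 'a"
  assumes P: "orth_proj P"
begin

lemma orth_proj_add: "P (x + y) = P x + P y"
  using P unfolding orth_proj_def clinear_on_def by blast

lemma orth_proj_scaleC: "P (scaleC c x) = scaleC c (P x)"
  using P unfolding orth_proj_def clinear_on_def by blast

lemma orth_proj_diff: "P (x - y) = P x - P y"
  using P unfolding orth_proj_def by (blast intro: clinear_onD_diff csubspace_UNIV)

lemma orth_proj_idem [simp]: "P (P x) = P x"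
  using P unfolding orth_proj_def by blast

lemma orth_proj_self_adjoint: "cinner (P x) y = cinner x (P y)"
  using P unfolding orth_proj_def by blast

lemma orth_proj_range_iff: "x \<in> range P \<longleftrightarrow> P x = x"
  by (metis orth_proj_idem rangeE rangeI)

lemma norm_orth_proj_le: "norm (P x) \<le> norm x"
proof -
  have "(norm (P x))^2 = Re (cinner (P x) x)"
    by (simp add: power2_norm_eq_cinner orth_proj_self_adjoint)
  also have "\<dots> \<le> norm (P x) * norm x"
    using complex_Re_le_cmod norm_cinner_le[of "P x" x] by (rule order_trans)
  finally show ?thesis
    by (cases "P x = 0") (simp_all add: power2_eq_square)
qed

lemma bounded_linear_orth_proj: "bounded_linear P"
proof
  show "P (x + y) = P x + P y" for x y by (rule orth_proj_add)
  show "P (r *\<^sub>R x) = r *\<^sub>R P x" for r x by (simp add: scaleR_scaleC orth_proj_scaleC)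
  show "\<exists>K. \<forall>x. norm (P x) \<le> norm x * K"
    by (intro exI[of _ 1]) (simp add: norm_orth_proj_le)
qed

lemma closed_range_orth_proj: "closed (range P)"
proof -
  have "closed {x. P x = x}"
    using bounded_linear.continuous_on[OF bounded_linear_orth_proj continuous_on_id]
    by (intro closed_Collect_eq continuous_on_id) simp_all
  moreover have "range P = {x. P x = x}" using orth_proj_range_iff by blast
  ultimately show ?thesis by simp
qed

lemma csubspace_range_orth_proj: "csubspace (range P)"
  unfolding csubspace_def orth_proj_range_iff
  using orth_proj_scaleC[of 0 0] by (simp add: orth_proj_add orth_proj_scaleC)

lemma orth_proj_complement:
  assumes "\<forall>x. P x + Q x = x"
  shows "P (Q x) = 0"
  using orth_proj_diff[of x "P x"] assms by (metis add_diff_cancel_left' diff_self orth_proj_idem)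

lemma range_orth_proj_subset_closure:
  assumes "closure S = UNIV" and "P ` S \<subseteq> D"
  shows "range P \<subseteq> closure D"
proof -
  have "P ` closure S \<subseteq> closure D"
    using assms(2) closure_subset
    by (intro image_closure_subset bounded_linear.continuous_on[OF bounded_linear_orth_proj]
        continuous_on_id) auto
  then show ?thesis using assms(1) by simp
qed

end

section \<open>Orthogonal complements of closed subspaces\<close>

lemma nonpos_if_le_quadratic:
  fixes a b :: real
  assumes "\<And>t. 0 < t \<Longrightarrow> t * a \<le> t^2 * b"
  shows "a \<le> 0"
proof (rule ccontr)
  assume "\<not> a \<le> 0"
  define t where "t = a / (\<bar>b\<bar> + 1)"
  have t: "0 < t" using \<open>\<not> a \<le> 0\<close> unfolding t_def by simp
  with assms have "t * a \<le> t * (t * b)" by (simp add: power2_eq_square)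
  with t have "a \<le> t * b" by simp
  also have "\<dots> < a"
  proof -
    have "a * b < a * (\<bar>b\<bar> + 1)"
      using \<open>\<not> a \<le> 0\<close> by (intro mult_strict_left_mono) auto
    then show ?thesis unfolding t_def by (simp add: field_simps)
  qed
  finally show False by simp
qed

lemma minimizing_seq_Cauchy:
  assumes "csubspace M" and s: "\<And>n. s n \<in> M" and d_le: "\<And>m. m \<in> M \<Longrightarrow> d \<le> (norm (w - m))^2"
    and s_d: "\<And>n. (norm (w - s n))^2 < d + inverse (real (Suc n))"
  shows "Cauchy s"
proof (rule metric_CauchyI)
  have s_close: "(norm (s n - s k))^2 \<le> 2 * inverse (real (Suc n)) + 2 * inverse (real (Suc k))"
    for n k
  proof -
    define mid where "mid = scaleR (1/2) (s n + s k)"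
    have "mid \<in> M"
      using s assms(1) csubspace_scaleC[of M _ "complex_of_real (1/2)"]
      unfolding mid_def by (simp add: scaleR_scaleC csubspace_add)
    moreover have "(w - s n) + (w - s k) = scaleR 2 (w - mid)"
      unfolding mid_def by (simp add: algebra_simps scaleR_2)
    ultimately have "4 * d \<le> (norm ((w - s n) + (w - s k)))^2"
      using d_le[of mid] by (simp add: power_mult_distrib)
    moreover have "(norm ((w - s n) + (w - s k)))^2 + (norm (s n - s k))^2
        = 2 * (norm (w - s n))^2 + 2 * (norm (w - s k))^2"
      using parallelogram_law[of "w - s n" "w - s k"] by (simp add: norm_minus_commute)
    ultimately show ?thesis using s_d[of n] s_d[of k] by linarith
  qed
  fix e :: real assume e: "e > 0"
  obtain N :: nat where N: "inverse (real (Suc N)) < e^2 / 4"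
    using reals_Archimedean[of "e^2/4"] e by auto
  have "dist (s m) (s n) < e" if "N \<le> m" "N \<le> n" for m n
  proof -
    have "inverse (real (Suc m)) \<le> inverse (real (Suc N))"
      "inverse (real (Suc n)) \<le> inverse (real (Suc N))"
      using that by (simp_all add: le_imp_inverse_le)
    then have "(norm (s m - s n))^2 < e^2" using s_close[of m n] N by linarith
    then show ?thesis using e by (simp add: dist_norm power_less_imp_less_base)
  qed
  then show "\<exists>N. \<forall>m\<ge>N. \<forall>n\<ge>N. dist (s m) (s n) < e" by blast
qed

lemma csubspace_best_approximation:
  fixes M :: "'a::chilbert_space set"
  assumes "closed M" and "csubspace M"
  obtains m0 where "m0 \<in> M" "\<And>m. m \<in> M \<Longrightarrow> norm (w - m0) \<le> norm (w - m)"
proof -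
  define d where "d = Inf ((\<lambda>m. (norm (w - m))^2) ` M)"
  have d_le: "d \<le> (norm (w - m))^2" if "m \<in> M" for m
    unfolding d_def using that by (intro cInf_lower bdd_belowI[of _ 0]) auto
  have "\<exists>m\<in>M. (norm (w - m))^2 < d + inverse (real (Suc n))" for n
  proof -
    have "d < d + inverse (real (Suc n))" by simp
    then show ?thesis
      using csubspace_0[OF assms(2)] unfolding d_def
      by (subst (asm) cInf_less_iff) (auto intro: bdd_belowI[of _ 0])
  qed
  then obtain s where s: "\<And>n. s n \<in> M"
    and s_d: "\<And>n. (norm (w - s n))^2 < d + inverse (real (Suc n))"
    by metis
  then have "Cauchy s"
    using minimizing_seq_Cauchy[OF assms(2) _ d_le] by blast
  then obtain m0 where lim: "s \<longlonglongrightarrow> m0"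
    using Cauchy_convergent_iff convergent_def by blast
  have "m0 \<in> M" using closed_sequentially[OF assms(1)] s lim by blast
  moreover have "(norm (w - m0))^2 \<le> d"
  proof (rule LIMSEQ_le)
    show "(\<lambda>n. (norm (w - s n))^2) \<longlonglongrightarrow> (norm (w - m0))^2"
      by (intro tendsto_intros lim)
    show "(\<lambda>n. d + inverse (real (Suc n))) \<longlonglongrightarrow> d"
      using tendsto_add[OF tendsto_const LIMSEQ_inverse_real_of_nat, of d] by simp
  qed (use s_d less_imp_le in blast)
  then have "norm (w - m0) \<le> norm (w - m)" if "m \<in> M" for m
    using d_le[OF that] by (meson order_trans power2_le_imp_le norm_ge_zero)
  ultimately show ?thesis using that by blast
qed

lemma best_approximation_orthogonal:
  assumes "csubspace M" "m0 \<in> M" "\<And>m. m \<in> M \<Longrightarrow> norm (w - m0) \<le> norm (w - m)"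
    and "m \<in> M"
  shows "cinner m (w - m0) = 0"
proof -
  define z a where "z = w - m0" and "a = cinner z m"
  have "t * (2 * (cmod a)^2) \<le> t^2 * ((cmod a)^2 * (norm m)^2)" if "0 < t" for t
  proof -
    have "m0 + scaleC (t * a) m \<in> M"
      using assms by (simp add: csubspace_add csubspace_scaleC)
    then have "(norm z)^2 \<le> (norm (z - scaleC (t * a) m))^2"
      using assms(3) unfolding z_def by (simp add: diff_diff_eq norm_ge_zero power_mono)
    also have "\<dots> = (norm z)^2 - 2 * t * (cmod a)^2 + t^2 * (cmod a)^2 * (norm m)^2"
      using that
      by (simp add: norm_diff_square cinner_simps norm_scaleC norm_mult power_mult_distrib a_def
          mult.assoc complex_norm_square[symmetric] mult.commute[of "cnj _"])
    finally show ?thesis by (simp add: algebra_simps)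
  qed
  then have "2 * (cmod a)^2 \<le> 0" by (rule nonpos_if_le_quadratic)
  then show ?thesis
    using cinner_commute[of m z] unfolding z_def a_def by simp
qed

lemma orthogonal_to_closed_csubspace:
  fixes M :: "'a::chilbert_space set"
  assumes "closed M" and "csubspace M" and "w \<notin> M"
  obtains z where "z \<noteq> 0" "w - z \<in> M" "\<And>m. m \<in> M \<Longrightarrow> cinner m z = 0"
proof -
  obtain m0 where "m0 \<in> M" "\<And>m. m \<in> M \<Longrightarrow> norm (w - m0) \<le> norm (w - m)"
    using csubspace_best_approximation[OF assms(1,2)] by metis
  with best_approximation_orthogonal[OF assms(2)] assms(3) show ?thesis
    by (intro that[of "w - m0"]) auto
qed

section \<open>Dissipative operators given by their graphs\<close>

lemma is_operator_zero: "is_operator T \<Longrightarrow> (0, 0) \<in> T"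
  unfolding is_operator_def by blast

lemma is_operator_add: "is_operator T \<Longrightarrow> (x, y) \<in> T \<Longrightarrow> (u, v) \<in> T \<Longrightarrow> (x + u, y + v) \<in> T"
  unfolding is_operator_def by (metis fst_conv snd_conv)

lemma is_operator_scaleC: "is_operator T \<Longrightarrow> (x, y) \<in> T \<Longrightarrow> (scaleC c x, scaleC c y) \<in> T"
  unfolding is_operator_def by (metis fst_conv snd_conv)

lemma is_operator_single_valued: "is_operator T \<Longrightarrow> (x, y) \<in> T \<Longrightarrow> (x, z) \<in> T \<Longrightarrow> y = z"
  unfolding is_operator_def by blast

lemma is_operator_diff: "is_operator T \<Longrightarrow> (x, y) \<in> T \<Longrightarrow> (u, v) \<in> T \<Longrightarrow> (x - u, y - v) \<in> T"
  using is_operator_add[of T x y "scaleC (-1) u" "scaleC (-1) v"] is_operator_scaleC[of T u v "-1"]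
  by simp

lemma mem_graph_iff: "(x, y) \<in> graph D f \<longleftrightarrow> x \<in> D \<and> y = f x"
  unfolding graph_def by auto

lemma fst_graph: "fst ` graph D f = D"
  unfolding graph_def by force

lemma is_operator_graph: "csubspace D \<Longrightarrow> clinear_on D f \<Longrightarrow> is_operator (graph D f)"
  unfolding is_operator_def graph_def
  by (auto simp: csubspace_0 csubspace_add csubspace_scaleC clinear_onD_zero clinear_onD_add
      clinear_onD_scaleC)

lemma dissipativeD: "dissipative T \<Longrightarrow> (x, y) \<in> T \<Longrightarrow> Re (cinner y x) \<le> 0"
  unfolding dissipative_def by auto

lemma dissipative_norm_le:
  assumes "Re (cinner y x) \<le> 0" and "0 < Re l"
  shows "Re l * norm x \<le> norm (y - scaleC l x)"
proof -
  have "norm x * (Re l * norm x) = - Re (cinner (y - scaleC l x) x) + Re (cinner y x)"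
    by (simp add: cinner_simps cinner_self_norm power2_eq_square)
  also have "\<dots> \<le> cmod (cinner (y - scaleC l x) x)"
    using assms(1) abs_Re_le_cmod[of "cinner (y - scaleC l x) x"] by linarith
  also have "\<dots> \<le> norm x * norm (y - scaleC l x)"
    by (metis norm_cinner_le mult.commute)
  finally show ?thesis
    by (cases "x = 0") (simp_all add: mult_le_cancel_left)
qed

lemma dissipative_graph_seq_converges:
  fixes p :: "nat \<Rightarrow> 'a::chilbert_space \<times> 'a"
  assumes "is_operator T" "dissipative T" "0 < Re l" "\<And>n. p n \<in> T"
    and lim: "(\<lambda>n. snd (p n) - scaleC l (fst (p n))) \<longlonglongrightarrow> w"
  obtains x where "p \<longlonglongrightarrow> (x, w + scaleC l x)"
proof -
  define r where "r n = snd (p n) - scaleC l (fst (p n))" for n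
  have bound: "Re l * norm (fst (p n) - fst (p k)) \<le> norm (r n - r k)" for n k
  proof -
    have "(fst (p n) - fst (p k), snd (p n) - snd (p k)) \<in> T"
      using is_operator_diff[OF assms(1)] assms(4)[of n] assms(4)[of k] by (metis prod.collapse)
    from dissipative_norm_le[OF dissipativeD[OF assms(2) this] assms(3)]
    show ?thesis unfolding r_def by (simp add: complex_vector.scale_right_diff_distrib algebra_simps)
  qed
  have "Cauchy r" using lim unfolding r_def by (rule LIMSEQ_imp_Cauchy)
  have "Cauchy (\<lambda>n. fst (p n))"
  proof (rule metric_CauchyI)
    fix e :: real assume "e > 0"
    then obtain M where M: "\<forall>m\<ge>M. \<forall>n\<ge>M. dist (r m) (r n) < Re l * e"
      using \<open>Cauchy r\<close> assms(3) unfolding Cauchy_def by (meson mult_pos_pos)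
    have "dist (fst (p m)) (fst (p n)) < e" if "M \<le> m" "M \<le> n" for m n
    proof -
      have "Re l * norm (fst (p m) - fst (p n)) < Re l * e"
        using M that bound[of m n] by (force simp: dist_norm)
      then show ?thesis using assms(3) by (simp add: dist_norm)
    qed
    then show "\<exists>M. \<forall>m\<ge>M. \<forall>n\<ge>M. dist (fst (p m)) (fst (p n)) < e" by blast
  qed
  then obtain x where x: "(\<lambda>n. fst (p n)) \<longlonglongrightarrow> x"
    using Cauchy_convergent_iff convergent_def by blast
  have "(\<lambda>n. r n + scaleC l (fst (p n))) \<longlonglongrightarrow> w + scaleC l x"
    using lim x unfolding r_def by (intro tendsto_intros)
  then have "(\<lambda>n. (fst (p n), snd (p n))) \<longlonglongrightarrow> (x, w + scaleC l x)"
    using x unfolding r_def by (intro tendsto_Pair) simp_all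
  then show ?thesis using that by simp
qed

lemma closure_closed_under_pair_map:
  fixes f :: "'a::real_normed_vector \<Rightarrow> 'a"
  assumes "bounded_linear f" and "\<And>x y. (x, y) \<in> T \<Longrightarrow> (f x, f y) \<in> T"
    and "(x, y) \<in> closure T"
  shows "(f x, f y) \<in> closure T"
proof -
  have "(\<lambda>p. (f (fst p), f (snd p))) ` T \<subseteq> closure T"
    using assms(2) closure_subset by force
  moreover have "continuous_on (closure T) (\<lambda>p. (f (fst p), f (snd p)))"
    by (intro continuous_on_Pair bounded_linear.continuous_on[OF assms(1)] continuous_on_fst
        continuous_on_snd continuous_on_id)
  ultimately have "(\<lambda>p. (f (fst p), f (snd p))) ` closure T \<subseteq> closure T"
    by (intro image_closure_subset) auto
  then have "(\<lambda>p. (f (fst p), f (snd p))) (x, y) \<in> closure T"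
    using assms(3) by (rule subsetD[OF _ imageI])
  then show ?thesis by simp
qed

lemma closure_closed_under_add:
  fixes T :: "('a::real_normed_vector \<times> 'a) set"
  assumes "\<And>p q. p \<in> T \<Longrightarrow> q \<in> T \<Longrightarrow> p + q \<in> T" and "p \<in> closure T" "q \<in> closure T"
  shows "p + q \<in> closure T"
proof -
  have "(\<lambda>r. fst r + snd r) ` (T \<times> T) \<subseteq> closure T"
    using assms(1) by (auto simp: mem_Times_iff intro: closure_subset[THEN subsetD])
  moreover have "continuous_on (closure (T \<times> T)) (\<lambda>r. fst r + snd r)"
    by (intro continuous_on_add continuous_on_fst continuous_on_snd continuous_on_id)
  ultimately have "(\<lambda>r. fst r + snd r) ` closure (T \<times> T) \<subseteq> closure T"
    by (intro image_closure_subset) auto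
  moreover have "(p, q) \<in> closure (T \<times> T)" using assms(2,3) by (simp add: closure_Times)
  ultimately have "(\<lambda>r. fst r + snd r) (p, q) \<in> closure T"
    by (rule subsetD[OF _ imageI])
  then show ?thesis by simp
qed

lemma dissipative_closure: "dissipative T \<Longrightarrow> dissipative (closure T)"
proof -
  assume "dissipative T"
  then have "T \<subseteq> {p. Re (cinner (snd p) (fst p)) \<le> 0}"
    unfolding dissipative_def by auto
  moreover have "closed {p. Re (cinner (snd p) (fst p)) \<le> 0}"
    by (intro closed_Collect_le continuous_intros)
  ultimately have "closure T \<subseteq> {p. Re (cinner (snd p) (fst p)) \<le> 0}"
    by (rule closure_minimal)
  then show ?thesis unfolding dissipative_def by auto
qed

text \<open>A limit point (0, v) of a dissipative operator is orthogonal to its domain,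
  so v = 0 when the domain is dense.\<close>
lemma closure_dissipative_zero_fiber:
  fixes T :: "('a::chilbert_space \<times> 'a) set"
  assumes op: "is_operator T" and diss: "dissipative T" and "closure T \<subseteq> X \<times> X"
    and dense: "X \<subseteq> closure (fst ` T)" and v: "(0, v) \<in> closure T"
  shows "v = 0"
proof -
  have add: "p + q \<in> closure T" if "p \<in> closure T" "q \<in> closure T" for p q
    using that is_operator_add[OF op] by (intro closure_closed_under_add) auto
  have "cinner v u = 0" if "(u, u') \<in> T" for u u'
  proof -
    define a where "a = cinner v u"
    have "t * (cmod a)^2 \<le> t^2 * - ((cmod a)^2 * Re (cinner u' u))" if "0 < t" for t
    proof -
      define c where "c = complex_of_real t * a"
      have "(scaleC c u, v + scaleC c u') \<in> closure T"
        using add[OF v] is_operator_scaleC[OF op \<open>(u, u') \<in> T\<close>] closure_subset by force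
      then have "Re (cinner (v + scaleC c u') (scaleC c u)) \<le> 0"
        by (rule dissipativeD[OF dissipative_closure[OF diss]])
      moreover have "a * cnj a = complex_of_real ((cmod a)^2)"
        by (rule complex_norm_square[symmetric])
      then have "cnj c * a = complex_of_real (t * (cmod a)^2)"
        and "c * cnj c = complex_of_real (t^2 * (cmod a)^2)"
        unfolding c_def by (simp_all add: power2_eq_square mult_ac)
      then have "cinner (v + scaleC c u') (scaleC c u)
          = complex_of_real (t * (cmod a)^2) + complex_of_real (t^2 * (cmod a)^2) * cinner u' u"
        unfolding a_def by (simp add: cinner_simps algebra_simps)
      ultimately show ?thesis by (simp add: algebra_simps)
    qed
    then have "(cmod a)^2 \<le> 0" by (rule nonpos_if_le_quadratic)
    then show ?thesis unfolding a_def by simp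
  qed
  then have "fst ` T \<subseteq> {u. cinner v u = 0}" by force
  moreover have "closed {u. cinner v u = 0}"
    by (intro closed_Collect_eq continuous_intros)
  ultimately have "closure (fst ` T) \<subseteq> {u. cinner v u = 0}" by (rule closure_minimal)
  moreover have "v \<in> X" using assms(3) v by blast
  ultimately show "v = 0" using dense cinner_self_eq_zero by blast
qed

lemma is_operator_closure:
  fixes T :: "('a::chilbert_space \<times> 'a) set"
  assumes "is_operator T" "dissipative T" "T \<subseteq> X \<times> X" "closed X" "X \<subseteq> closure (fst ` T)"
  shows "is_operator (closure T)"
proof -
  have clX: "closure T \<subseteq> X \<times> X"
    using assms(3,4) by (intro closure_minimal closed_Times) auto
  have add: "(x + u, y + v) \<in> closure T" if "(x, y) \<in> closure T" "(u, v) \<in> closure T" for x y u v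
    using closure_closed_under_add[OF _ that] is_operator_add[OF assms(1)] by force
  have scale: "(scaleC c x, scaleC c y) \<in> closure T" if "(x, y) \<in> closure T" for c x y
    using closure_closed_under_pair_map[OF bounded_linear_scaleC _ that] is_operator_scaleC[OF assms(1)]
    by blast
  have single_valued: "y = z" if "(x, y) \<in> closure T" "(x, z) \<in> closure T" for x y z
  proof -
    have "(0, y - z) \<in> closure T"
      using add[OF that(1) scale[OF that(2), of "-1"]] by simp
    then have "y - z = 0"
      by (rule closure_dissipative_zero_fiber[OF assms(1,2) clX assms(5)])
    then show ?thesis by simp
  qed
  moreover have "(0, 0) \<in> closure T"
    using is_operator_zero[OF assms(1)] closure_subset by blast
  ultimately show ?thesis
    unfolding is_operator_def using add scale by auto
qed

definition op_extension :: "('a::complex_inner \<times> 'a) set \<Rightarrow> 'a \<Rightarrow> 'a \<Rightarrow> ('a \<times> 'a) set" where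
  "op_extension T z v = {(x + scaleC c z, y + scaleC c v) | x y c. (x, y) \<in> T}"

lemma subset_op_extension: "T \<subseteq> op_extension T z v"
  unfolding op_extension_def by (force intro: exI[of _ 0])

lemma op_extension_point: "is_operator T \<Longrightarrow> (z, v) \<in> op_extension T z v"
  unfolding op_extension_def using is_operator_zero by (force intro: exI[of _ 1])

lemma op_extension_single_valued:
  assumes op: "is_operator T" and z: "\<And>y. (z, y) \<notin> T"
    and "(u, w1) \<in> op_extension T z v" "(u, w2) \<in> op_extension T z v"
  shows "w1 = w2"
proof -
  obtain x1 y1 c1 x2 y2 c2 where T1: "(x1, y1) \<in> T" "u = x1 + scaleC c1 z" "w1 = y1 + scaleC c1 v"
    and T2: "(x2, y2) \<in> T" "u = x2 + scaleC c2 z" "w2 = y2 + scaleC c2 v"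
    using assms(3,4) unfolding op_extension_def by blast
  have x12: "x1 = u - scaleC c1 z" "x2 = u - scaleC c2 z"
    using T1(2) T2(2) add_diff_cancel_right' by metis+
  then have diff: "(scaleC (c2 - c1) z, y1 - y2) \<in> T"
    using is_operator_diff[OF op T1(1) T2(1)] by (simp add: complex_vector.scale_left_diff_distrib)
  have "c1 = c2"
  proof (rule ccontr)
    assume "c1 \<noteq> c2"
    then show False
      using is_operator_scaleC[OF op diff, of "1 / (c2 - c1)"] z by simp
  qed
  then have "y1 = y2"
    using x12 T2(1) is_operator_single_valued[OF op T1(1)] by simp
  then show ?thesis
    using \<open>c1 = c2\<close> T1(3) T2(3) by simp
qed

lemma is_operator_op_extension:
  assumes op: "is_operator T" and z: "\<And>y. (z, y) \<notin> T"
  shows "is_operator (op_extension T z v)"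
  unfolding is_operator_def
proof (intro conjI ballI allI impI)
  show "(0, 0) \<in> op_extension T z v"
    using subset_op_extension is_operator_zero[OF op] by blast
next
  fix p q assume "p \<in> op_extension T z v" "q \<in> op_extension T z v"
  then obtain x1 y1 c1 x2 y2 c2 where "(x1, y1) \<in> T" "p = (x1 + scaleC c1 z, y1 + scaleC c1 v)"
    "(x2, y2) \<in> T" "q = (x2 + scaleC c2 z, y2 + scaleC c2 v)"
    unfolding op_extension_def by blast
  then have "(fst p + fst q, snd p + snd q)
      = ((x1 + x2) + scaleC (c1 + c2) z, (y1 + y2) + scaleC (c1 + c2) v)"
    by (simp add: scaleC_add_left algebra_simps)
  with is_operator_add[OF op \<open>(x1, y1) \<in> T\<close> \<open>(x2, y2) \<in> T\<close>]
  show "(fst p + fst q, snd p + snd q) \<in> op_extension T z v"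
    unfolding op_extension_def by blast
next
  fix d p assume "p \<in> op_extension T z v"
  then obtain x y c where "(x, y) \<in> T" "p = (x + scaleC c z, y + scaleC c v)"
    unfolding op_extension_def by blast
  then have "(scaleC d (fst p), scaleC d (snd p))
      = (scaleC d x + scaleC (d * c) z, scaleC d y + scaleC (d * c) v)"
    by (simp add: scaleC_add_right)
  with is_operator_scaleC[OF op \<open>(x, y) \<in> T\<close>]
  show "(scaleC d (fst p), scaleC d (snd p)) \<in> op_extension T z v"
    unfolding op_extension_def by blast
next
  fix u w1 w2 assume "(u, w1) \<in> op_extension T z v" "(u, w2) \<in> op_extension T z v"
  then show "w1 = w2" by (rule op_extension_single_valued[OF op z])
qed

lemma dissipative_op_extension:
  assumes diss: "dissipative T" and "0 \<le> Re l"
    and orth: "\<And>x y. (x, y) \<in> T \<Longrightarrow> cinner (y - scaleC l x) z = 0"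
  shows "dissipative (op_extension T z (- scaleC (cnj l) z))"
  unfolding dissipative_def
proof clarify
  fix u w assume "(u, w) \<in> op_extension T z (- scaleC (cnj l) z)"
  then obtain x y c where xy: "(x, y) \<in> T" and u: "u = x + scaleC c z"
    and w: "w = y + scaleC c (- scaleC (cnj l) z)"
    unfolding op_extension_def by blast
  define W where "W = cnj c * (l * cinner x z)"
  have "cinner y z = l * cinner x z"
    using orth[OF xy] by (simp add: cinner_simps)
  then have "cinner w u = cinner y x + (W - cnj W) - cnj l * (c * cnj c) * cinner z z"
    unfolding u w W_def by (simp add: cinner_simps algebra_simps cinner_commute[of z x])
  also have "c * cnj c = complex_of_real ((cmod c)^2)"
    by (rule complex_norm_square[symmetric])
  finally have "Re (cinner w u) = Re (cinner y x) - Re l * ((cmod c)^2 * (norm z)^2)"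
    by (simp add: cinner_self_norm)
  then show "Re (cinner w u) \<le> 0"
    using dissipativeD[OF diss xy] mult_nonneg_nonneg[OF assms(2), of "(cmod c)^2 * (norm z)^2"]
    by simp
qed

lemma csubspace_shifted_range:
  "is_operator T \<Longrightarrow> csubspace ((\<lambda>p. snd p - scaleC l (fst p)) ` T)"
  unfolding csubspace_def
proof (intro conjI ballI allI)
  assume op: "is_operator T"
  show "0 \<in> (\<lambda>p. snd p - scaleC l (fst p)) ` T"
    using is_operator_zero[OF op] by force
  fix a b assume "a \<in> (\<lambda>p. snd p - scaleC l (fst p)) ` T" "b \<in> (\<lambda>p. snd p - scaleC l (fst p)) ` T"
  then obtain x y u v where "(x, y) \<in> T" "(u, v) \<in> T"
    "a = y - scaleC l x" "b = v - scaleC l u"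
    by auto
  moreover have "a + b = (y + v) - scaleC l (x + u)"
    using calculation by (simp add: scaleC_add_right)
  ultimately show "a + b \<in> (\<lambda>p. snd p - scaleC l (fst p)) ` T"
    by (auto intro!: image_eqI[where x = "(x + u, y + v)"] is_operator_add[OF op])
next
  fix c a assume op: "is_operator T" and "a \<in> (\<lambda>p. snd p - scaleC l (fst p)) ` T"
  then obtain x y where "(x, y) \<in> T" "a = y - scaleC l x"
    by auto
  moreover have "scaleC c a = scaleC c y - scaleC l (scaleC c x)"
    using calculation by (simp add: complex_vector.scale_right_diff_distrib mult.commute)
  ultimately show "scaleC c a \<in> (\<lambda>p. snd p - scaleC l (fst p)) ` T"
    by (auto intro!: image_eqI[where x = "(scaleC c x, scaleC c y)"] is_operator_scaleC[OF op])
qed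

lemma closure_image_seq:
  fixes g :: "'a \<Rightarrow> 'b::metric_space"
  assumes "w \<in> closure (g ` D)"
  obtains d where "\<And>n. d n \<in> D" "(\<lambda>n. g (d n)) \<longlonglongrightarrow> w"
proof -
  obtain r where r: "\<And>n. r n \<in> g ` D" "r \<longlonglongrightarrow> w"
    using assms unfolding closure_sequential by blast
  then have "\<forall>n. \<exists>x. x \<in> D \<and> r n = g x" by blast
  then obtain d where "\<And>n. d n \<in> D" "\<And>n. r n = g (d n)" by metis
  moreover from this(2) have "(\<lambda>n. g (d n)) = r" by auto
  ultimately show ?thesis using r(2) by (intro that) auto
qed

lemma closure_shifted_range_subset:
  fixes T :: "('a::chilbert_space \<times> 'a) set"
  assumes "is_operator T" "dissipative T" "0 < Re l"
  shows "closure ((\<lambda>p. snd p - scaleC l (fst p)) ` T) \<subseteq> (\<lambda>p. snd p - scaleC l (fst p)) ` closure T"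
proof
  fix w assume "w \<in> closure ((\<lambda>p. snd p - scaleC l (fst p)) ` T)"
  then obtain p where p: "\<And>n. p n \<in> T" and "(\<lambda>n. snd (p n) - scaleC l (fst (p n))) \<longlonglongrightarrow> w"
    using closure_image_seq by blast
  then obtain x where "p \<longlonglongrightarrow> (x, w + scaleC l x)"
    using dissipative_graph_seq_converges[where p = p, OF assms p] by blast
  then have "(x, w + scaleC l x) \<in> closure T"
    using p unfolding closure_sequential by blast
  then show "w \<in> (\<lambda>p. snd p - scaleC l (fst p)) ` closure T"
    by (auto intro!: image_eqI[where x = "(x, w + scaleC l x)"])
qed

lemma closed_if_m_dissipative:
  fixes T :: "('a::chilbert_space \<times> 'a) set"
  assumes m: "m_dissipative_in X T" and "closed X" and "X \<subseteq> closure (fst ` T)"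
  shows "closed T"
proof -
  have "T \<subseteq> X \<times> X" "is_operator T" "dissipative T"
    using m unfolding m_dissipative_in_def by blast+
  moreover have "closure T \<subseteq> X \<times> X"
    using \<open>T \<subseteq> X \<times> X\<close> \<open>closed X\<close> by (intro closure_minimal closed_Times) auto
  ultimately have "closure T = T"
    using m is_operator_closure[OF _ _ _ assms(2,3)] dissipative_closure closure_subset
    unfolding m_dissipative_in_def by metis
  then show ?thesis by (metis closed_closure)
qed

lemma op_extension_subset:
  assumes "T \<subseteq> X \<times> X" "csubspace X" "z \<in> X" "v \<in> X"
  shows "op_extension T z v \<subseteq> X \<times> X"
proof
  fix p assume "p \<in> op_extension T z v"
  then obtain x y c where "(x, y) \<in> T" "p = (x + scaleC c z, y + scaleC c v)"
    unfolding op_extension_def by blast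
  then show "p \<in> X \<times> X"
    using assms by (auto intro!: csubspace_add csubspace_scaleC)
qed

lemma shifted_range_subset:
  assumes "T \<subseteq> X \<times> X" "csubspace X"
  shows "(\<lambda>p. snd p - scaleC l (fst p)) ` T \<subseteq> X"
proof
  fix m assume "m \<in> (\<lambda>p. snd p - scaleC l (fst p)) ` T"
  then obtain x y where "(x, y) \<in> T" "m = y - scaleC l x" by auto
  then show "m \<in> X"
    using assms by (auto intro!: csubspace_diff csubspace_scaleC)
qed

lemma orthogonal_to_shifted_range_not_in_domain:
  assumes "dissipative T" "0 < Re l" "z \<noteq> 0"
    and orth: "\<And>x y. (x, y) \<in> T \<Longrightarrow> cinner (y - scaleC l x) z = 0"
  shows "(z, y) \<notin> T"
proof
  assume zy: "(z, y) \<in> T"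
  then have "cinner y z = l * complex_of_real ((norm z)^2)"
    using orth[OF zy] by (simp add: cinner_simps cinner_self_norm)
  then have "0 < Re (cinner y z)" using assms(2,3) by simp
  then show False using dissipativeD[OF assms(1) zy] by simp
qed

text \<open>Otherwise an element z orthogonal to the range of T - l could be adjoined to T with
  value -(cnj l) z, contradicting maximality.\<close>
lemma m_dissipative_shifted_range:
  fixes T :: "('a::chilbert_space \<times> 'a) set"
  assumes m: "m_dissipative_in X T" and X: "closed X" "csubspace X"
    and dense: "X \<subseteq> closure (fst ` T)" and l: "0 < Re l" and w: "w \<in> X"
  shows "w \<in> (\<lambda>p. snd p - scaleC l (fst p)) ` T"
proof (rule ccontr)
  let ?R = "(\<lambda>p. snd p - scaleC l (fst p)) ` T"
  have TX: "T \<subseteq> X \<times> X" and op: "is_operator T" and diss: "dissipative T"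
    using m unfolding m_dissipative_in_def by blast+
  assume "w \<notin> ?R"
  moreover have "closure T = T"
    using closed_if_m_dissipative[OF m X(1) dense] by (rule closure_closed)
  then have "closed ?R"
    using closure_shifted_range_subset[OF op diss l] unfolding closure_subset_eq[symmetric] by simp
  ultimately obtain z where z: "z \<noteq> 0" "w - z \<in> ?R" and orth: "\<And>m. m \<in> ?R \<Longrightarrow> cinner m z = 0"
    using orthogonal_to_closed_csubspace csubspace_shifted_range[OF op] by blast
  have zX: "z \<in> X"
    using z(2) w csubspace_diff[OF X(2), of w "w - z"] shifted_range_subset[OF TX X(2)] by auto
  have orth_T: "cinner (y - scaleC l x) z = 0" if "(x, y) \<in> T" for x y
    using that by (intro orth) (auto intro!: image_eqI[where x = "(x, y)"])
  have z_notin: "(z, y) \<notin> T" for y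
    using orthogonal_to_shifted_range_not_in_domain[OF diss l z(1) orth_T] .
  define T' where "T' = op_extension T z (- scaleC (cnj l) z)"
  have "- scaleC (cnj l) z \<in> X"
    using csubspace_scaleC[OF X(2) zX, of "- cnj l"] by simp
  then have "T' \<subseteq> X \<times> X"
    unfolding T'_def using op_extension_subset[OF TX X(2) zX] by blast
  moreover have "is_operator T'" "dissipative T'"
    unfolding T'_def using is_operator_op_extension[OF op z_notin] l
    by (auto intro!: dissipative_op_extension[OF diss _ orth_T])
  moreover have "T \<subseteq> T'"
    unfolding T'_def by (rule subset_op_extension)
  ultimately have "T' = T"
    using m unfolding m_dissipative_in_def by blast
  then have "(z, - scaleC (cnj l) z) \<in> T"
    using op_extension_point[OF op, of z "- scaleC (cnj l) z"] unfolding T'_def by simp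
  then show False
    using z_notin by blast
qed

lemma shifted_range_graph: "(\<lambda>p. snd p - scaleC l (fst p)) ` graph D f = (\<lambda>x. f x - scaleC l x) ` D"
  unfolding graph_def by force

context
  fixes X D :: "'a::chilbert_space set" and f :: "'a \<Rightarrow> 'a" and l :: complex
  assumes X: "closed X" "csubspace X"
    and D: "csubspace D" "D \<subseteq> X" "X \<subseteq> closure D"
    and f: "clinear_on D f" "\<And>x. x \<in> D \<Longrightarrow> f x \<in> X"
    and diss: "dissipative (graph D f)" and l: "0 < Re l"
begin

lemma m_dissipative_closure_graph_if_dense_range:
  assumes range: "X \<subseteq> closure ((\<lambda>x. f x - scaleC l x) ` D)"
  shows "m_dissipative_in X (closure (graph D f))"
proof -
  let ?G = "graph D f"
  have GX: "?G \<subseteq> X \<times> X"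
    using D(2) f(2) unfolding graph_def by auto
  then have "closure ?G \<subseteq> X \<times> X"
    using X(1) by (intro closure_minimal closed_Times) auto
  moreover have "is_operator (closure ?G)"
    using is_operator_closure[OF is_operator_graph[OF D(1) f(1)] diss GX X(1)] D(3)
    by (simp add: fst_graph)
  moreover have "T' \<subseteq> closure ?G"
    if T': "closure ?G \<subseteq> T'" "T' \<subseteq> X \<times> X" "is_operator T'" "dissipative T'" for T'
  proof
    fix q assume "q \<in> T'"
    then obtain x' y' where q: "q = (x', y')" and xy': "(x', y') \<in> T'" by (cases q) auto
    define w where "w = y' - scaleC l x'"
    have "w \<in> X"
      using xy' T'(2) X(2) unfolding w_def by (auto intro: csubspace_diff csubspace_scaleC)
    then have "w \<in> closure ((\<lambda>p. snd p - scaleC l (fst p)) ` ?G)"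
      using range unfolding shifted_range_graph by blast
    then have "w \<in> (\<lambda>p. snd p - scaleC l (fst p)) ` closure ?G"
      using closure_shifted_range_subset[OF is_operator_graph[OF D(1) f(1)] diss l] by blast
    then obtain x where x: "(x, w + scaleC l x) \<in> closure ?G"
      by (auto simp: algebra_simps)
    then have "(x' - x, scaleC l (x' - x)) \<in> T'"
      using is_operator_diff[OF T'(3) xy', of x "w + scaleC l x"] T'(1)
      unfolding w_def by (auto simp: complex_vector.scale_right_diff_distrib)
    then have "Re l * (norm (x' - x))^2 \<le> 0"
      using dissipativeD[OF T'(4)] by (fastforce simp: cinner_scaleC_left cinner_self_norm)
    then have "x' = x" using l by (simp add: mult_le_0_iff)
    then have "y' = w + scaleC l x"
      using is_operator_single_valued[OF T'(3) xy'] x T'(1) by blast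
    then show "q \<in> closure ?G" using x q \<open>x' = x\<close> by simp
  qed
  ultimately show ?thesis
    unfolding m_dissipative_in_def using dissipative_closure[OF diss] by blast
qed

lemma m_dissipative_closure_graph_iff:
  "m_dissipative_in X (closure (graph D f)) \<longleftrightarrow> X \<subseteq> closure ((\<lambda>x. f x - scaleC l x) ` D)"
proof
  assume m: "m_dissipative_in X (closure (graph D f))"
  have "X \<subseteq> closure (fst ` closure (graph D f))"
    using D(3) closure_mono[OF image_mono[OF closure_subset]] by (force simp: fst_graph)
  then have "X \<subseteq> (\<lambda>p. snd p - scaleC l (fst p)) ` closure (graph D f)"
    using m_dissipative_shifted_range[OF m X _ l] by blast
  also have "\<dots> \<subseteq> closure ((\<lambda>p. snd p - scaleC l (fst p)) ` graph D f)"
    by (intro image_closure_subset[OF _ closed_closure closure_subset] continuous_intros)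
  finally show "X \<subseteq> closure ((\<lambda>x. f x - scaleC l x) ` D)"
    by (simp only: shifted_range_graph)
qed (rule m_dissipative_closure_graph_if_dense_range)

end

lemma inj_on_if_dissipative_minus:
  assumes op: "is_operator (graph D (\<lambda>x. - T x))" and diss: "dissipative (graph D (\<lambda>x. - T x))"
    and \<mu>: "Re \<mu> < 0"
  shows "inj_on (\<lambda>x. T x - scaleC \<mu> x) D"
proof (rule inj_onI)
  fix x1 x2 assume x: "x1 \<in> D" "x2 \<in> D" and eq: "T x1 - scaleC \<mu> x1 = T x2 - scaleC \<mu> x2"
  have "(x1 - x2, - T x1 - - T x2) \<in> graph D (\<lambda>x. - T x)"
    using is_operator_diff[OF op] x by (simp add: mem_graph_iff)
  moreover have "- T x1 - - T x2 = - scaleC \<mu> (x1 - x2)"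
    using eq by (simp add: complex_vector.scale_right_diff_distrib algebra_simps)
  ultimately have "Re (cinner (- scaleC \<mu> (x1 - x2)) (x1 - x2)) \<le> 0"
    using dissipativeD[OF diss] by simp
  then have "- Re \<mu> * (norm (x1 - x2))^2 \<le> 0"
    by (simp add: cinner_minus_left cinner_scaleC_left cinner_self_norm)
  then show "x1 = x2" using \<mu> by (simp add: zero_le_mult_iff)
qed

lemma bij_betw_if_m_dissipative_minus:
  fixes T :: "'a::chilbert_space \<Rightarrow> 'a"
  assumes m: "m_dissipative_in X (graph D (\<lambda>x. - T x))" and X: "closed X" "csubspace X"
    and dense: "X \<subseteq> closure D" and \<mu>: "Re \<mu> < 0"
  shows "bij_betw (\<lambda>x. T x - scaleC \<mu> x) D X"
  unfolding bij_betw_def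
proof
  have GX: "graph D (\<lambda>x. - T x) \<subseteq> X \<times> X" and op: "is_operator (graph D (\<lambda>x. - T x))"
    and diss: "dissipative (graph D (\<lambda>x. - T x))"
    using m unfolding m_dissipative_in_def by blast+
  show "inj_on (\<lambda>x. T x - scaleC \<mu> x) D"
    by (rule inj_on_if_dissipative_minus[OF op diss \<mu>])
  have DX: "x \<in> D \<Longrightarrow> x \<in> X \<and> T x \<in> X" for x
    using GX csubspace_scaleC[OF X(2), of "- T x" "-1"] unfolding graph_def by auto
  show "(\<lambda>x. T x - scaleC \<mu> x) ` D = X"
  proof
    show "(\<lambda>x. T x - scaleC \<mu> x) ` D \<subseteq> X"
      using DX by (auto intro: csubspace_diff[OF X(2)] csubspace_scaleC[OF X(2)])
  next
    show "X \<subseteq> (\<lambda>x. T x - scaleC \<mu> x) ` D"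
    proof
      fix g assume "g \<in> X"
      then have "- g \<in> X" using csubspace_scaleC[OF X(2), of g "-1"] by simp
      moreover have "X \<subseteq> closure (fst ` graph D (\<lambda>x. - T x))"
        using dense by (simp add: fst_graph)
      moreover have "0 < Re (- \<mu>)" using \<mu> by simp
      ultimately have "- g \<in> (\<lambda>p. snd p - scaleC (- \<mu>) (fst p)) ` graph D (\<lambda>x. - T x)"
        using m_dissipative_shifted_range[OF m X] by blast
      then obtain x where "x \<in> D" "- T x - scaleC (- \<mu>) x = - g"
        unfolding graph_def by auto
      then show "g \<in> (\<lambda>x. T x - scaleC \<mu> x) ` D"
        by (auto intro!: image_eqI[where x = x] simp: algebra_simps)
    qed
  qed
qed

lemma closure_image_involution:
  assumes "continuous_on UNIV f" and "\<And>x. f (f x) = x"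
  shows "f ` closure S = closure (f ` S)"
proof -
  have image: "f ` closure T \<subseteq> closure (f ` T)" for T
    using image_closure_subset[OF continuous_on_subset[OF assms(1) subset_UNIV] closed_closure
        closure_subset] .
  have "f ` f ` T = T" for T
    using assms(2) by (simp add: image_comp comp_def)
  then have "closure (f ` S) \<subseteq> f ` closure S"
    using image[of "f ` S"] by (metis image_mono)
  with image[of S] show ?thesis by blast
qed

lemma closure_graph_compose_involution:
  fixes J :: "'a::real_normed_vector \<Rightarrow> 'a"
  assumes "bounded_linear J" and "\<And>y. J (J y) = y"
  shows "{(x, J y) | x y. (x, y) \<in> closure (graph D A)} = closure (graph D (\<lambda>x. J (A x)))"
proof -
  let ?\<Phi> = "\<lambda>p. (fst p, J (snd p))"
  have "continuous_on UNIV ?\<Phi>"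
    by (intro continuous_on_Pair continuous_on_fst continuous_on_id
        bounded_linear.continuous_on[OF assms(1)] continuous_on_snd)
  then have "?\<Phi> ` closure (graph D A) = closure (?\<Phi> ` graph D A)"
    by (rule closure_image_involution) (simp add: assms(2))
  moreover have "?\<Phi> ` graph D A = graph D (\<lambda>x. J (A x))"
    unfolding graph_def by (auto intro: image_eqI[where x = "(_, A _)"])
  moreover have "{(x, J y) | x y. (x, y) \<in> closure (graph D A)} = ?\<Phi> ` closure (graph D A)"
    by (auto simp: image_def intro: bexI[where x = "(_, _)"])
  ultimately show ?thesis by simp
qed

section \<open>Block operator matrices\<close>

locale block_operator =
  fixes Pp Pm :: "'a::chilbert_space \<Rightarrow> 'a" and Dp Dm DA :: "'a set" and A J :: "'a \<Rightarrow> 'a"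
  assumes proj_p: "orth_proj Pp" and proj_m: "orth_proj Pm"
    and compl: "\<forall>x. Pp x + Pm x = x"
    and Dp: "csubspace Dp" "Dp \<subseteq> range Pp"
    and Dm: "csubspace Dm" "Dm \<subseteq> range Pm"
    and DA_eq: "DA = {xp + xm | xp xm. xp \<in> Dp \<and> xm \<in> Dm}"
    and J_eq: "J = (\<lambda>x. Pp x - Pm x)"
    and A: "clinear_on DA A"
begin

lemma Pp_Pm [simp]: "Pp (Pm x) = 0"
  using orth_proj_complement[OF proj_p compl] .

lemma Pm_Pp [simp]: "Pm (Pp x) = 0"
  using orth_proj_complement[OF proj_m] compl by (simp add: add.commute)

lemma Pp_idem [simp]: "Pp (Pp x) = Pp x" and Pm_idem [simp]: "Pm (Pm x) = Pm x"
  using orth_proj_idem[OF proj_p] orth_proj_idem[OF proj_m] by blast+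

lemmas P_simps = orth_proj_add[OF proj_p] orth_proj_add[OF proj_m]
  orth_proj_diff[OF proj_p] orth_proj_diff[OF proj_m]
  orth_proj_scaleC[OF proj_p] orth_proj_scaleC[OF proj_m]

lemma Dp_proj: "x \<in> Dp \<Longrightarrow> Pp x = x" "x \<in> Dp \<Longrightarrow> Pm x = 0"
  using Dp(2) by auto

lemma Dm_proj: "x \<in> Dm \<Longrightarrow> Pm x = x" "x \<in> Dm \<Longrightarrow> Pp x = 0"
  using Dm(2) by auto

lemma cinner_Pp_range_Pm: "v \<in> range Pm \<Longrightarrow> cinner (Pp u) v = 0"
  by (auto simp: orth_proj_self_adjoint[OF proj_p])

lemma cinner_Pm_range_Pp: "v \<in> range Pp \<Longrightarrow> cinner (Pm u) v = 0"
  by (auto simp: orth_proj_self_adjoint[OF proj_m])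

lemma Dp_subset_DA: "x \<in> Dp \<Longrightarrow> x \<in> DA"
  unfolding DA_eq using csubspace_0[OF Dm(1)] by force

lemma Dm_subset_DA: "x \<in> Dm \<Longrightarrow> x \<in> DA"
  unfolding DA_eq using csubspace_0[OF Dp(1)] by force

lemma DA_cases:
  assumes "x \<in> DA"
  obtains xp xm where "xp \<in> Dp" "xm \<in> Dm" "x = xp + xm"
  using assms unfolding DA_eq by blast

lemma csubspace_DA: "csubspace DA"
  unfolding csubspace_def
proof (intro conjI ballI allI)
  show "0 \<in> DA" using Dp_subset_DA csubspace_0[OF Dp(1)] by blast
next
  fix x y assume "x \<in> DA" "y \<in> DA"
  obtain a b where "a \<in> Dp" "b \<in> Dm" "x = a + b" using \<open>x \<in> DA\<close> by (rule DA_cases)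
  moreover obtain c d where "c \<in> Dp" "d \<in> Dm" "y = c + d" using \<open>y \<in> DA\<close> by (rule DA_cases)
  ultimately have "a + c \<in> Dp" "b + d \<in> Dm" "x + y = (a + c) + (b + d)"
    using csubspace_add[OF Dp(1)] csubspace_add[OF Dm(1)] by (auto simp: algebra_simps)
  then show "x + y \<in> DA"
    unfolding DA_eq by blast
next
  fix c x assume "x \<in> DA"
  then obtain a b where "a \<in> Dp" "b \<in> Dm" "x = a + b" by (rule DA_cases)
  then have "scaleC c a \<in> Dp" "scaleC c b \<in> Dm" "scaleC c x = scaleC c a + scaleC c b"
    using csubspace_scaleC[OF Dp(1)] csubspace_scaleC[OF Dm(1)] by (auto simp: scaleC_add_right)
  then show "scaleC c x \<in> DA"
    unfolding DA_eq by blast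
qed

lemma A_add: "x \<in> DA \<Longrightarrow> y \<in> DA \<Longrightarrow> A (x + y) = A x + A y"
  by (rule clinear_onD_add[OF A])

lemma A_diff: "x \<in> DA \<Longrightarrow> y \<in> DA \<Longrightarrow> A (x - y) = A x - A y"
  by (rule clinear_onD_diff[OF A csubspace_DA])

lemma A_scaleC: "x \<in> DA \<Longrightarrow> A (scaleC c x) = scaleC c (A x)"
  by (rule clinear_onD_scaleC[OF A])

lemma J_apply: "J y = Pp y - Pm y"
  by (simp add: J_eq)

lemma J_J: "J (J y) = y"
  using compl by (simp add: J_apply P_simps)

lemma bounded_linear_J: "bounded_linear J"
  unfolding J_eq
  by (intro bounded_linear_sub bounded_linear_orth_proj[OF proj_p] bounded_linear_orth_proj[OF proj_m])

lemma clinear_on_JA: "clinear_on DA (\<lambda>x. J (A x))"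
  by (rule clinear_on_compose[OF A])
    (simp add: clinear_on_def J_apply P_simps algebra_simps complex_vector.scale_right_diff_distrib)

lemma closure_graph_JA:
  "{(x, J y) | x y. (x, y) \<in> closure (graph DA A)} = closure (graph DA (\<lambda>x. J (A x)))"
  by (rule closure_graph_compose_involution[OF bounded_linear_J J_J])

lemma range_Pp_subset_closure_Dp: "closure DA = UNIV \<Longrightarrow> range Pp \<subseteq> closure Dp"
  by (rule range_orth_proj_subset_closure[OF proj_p])
    (auto elim!: DA_cases simp: P_simps Dp_proj Dm_proj)

lemma range_Pm_subset_closure_Dm: "closure DA = UNIV \<Longrightarrow> range Pm \<subseteq> closure Dm"
  by (rule range_orth_proj_subset_closure[OF proj_m])
    (auto elim!: DA_cases simp: P_simps Dp_proj Dm_proj)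

end

locale block_operator_resolvent = block_operator +
  fixes \<mu> :: complex
  assumes bij_A22: "bij_betw (\<lambda>x. Pm (A x) - scaleC \<mu> x) Dm (range Pm)"
begin

abbreviation R :: "'a \<Rightarrow> 'a" where "R \<equiv> resolvent Dm (\<lambda>z. Pm (A z)) \<mu>"
abbreviation F :: "'a \<Rightarrow> 'a" where "F x \<equiv> R (Pm (A x))"
abbreviation G :: "'a \<Rightarrow> 'a" where "G y \<equiv> Pp (A (R y))"
abbreviation S :: "'a \<Rightarrow> 'a" where "S x \<equiv> Pp (A x) - Pp (A (F x))"

lemma surj_A22: "y \<in> range Pm \<Longrightarrow> y \<in> (\<lambda>x. Pm (A x) - scaleC \<mu> x) ` Dm"
  using bij_betw_imp_surj_on[OF bij_A22] by simp

lemma R_in_Dm: "y \<in> range Pm \<Longrightarrow> R y \<in> Dm"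
  unfolding resolvent_def by (rule inv_into_into[OF surj_A22])

lemma A22_R: "y \<in> range Pm \<Longrightarrow> Pm (A (R y)) - scaleC \<mu> (R y) = y"
  unfolding resolvent_def using f_inv_into_f[OF surj_A22] by simp

lemma R_A22: "x \<in> Dm \<Longrightarrow> R (Pm (A x) - scaleC \<mu> x) = x"
  unfolding resolvent_def using bij_betw_imp_inj_on[OF bij_A22] by (rule inv_into_f_f)

lemma clinear_on_R: "clinear_on (range Pm) R"
  unfolding clinear_on_def
proof (intro conjI ballI allI)
  fix a b assume a: "a \<in> range Pm" and b: "b \<in> range Pm"
  have "Pm (A (R a + R b)) - scaleC \<mu> (R a + R b) = a + b"
    using R_in_Dm[OF a] R_in_Dm[OF b] A22_R[OF a] A22_R[OF b]
    by (simp add: A_add Dm_subset_DA P_simps scaleC_add_right algebra_simps)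
  then show "R (a + b) = R a + R b"
    using R_A22 R_in_Dm[OF a] R_in_Dm[OF b] csubspace_add[OF Dm(1)] by metis
next
  fix c a assume a: "a \<in> range Pm"
  have "Pm (A (scaleC c (R a))) - scaleC \<mu> (scaleC c (R a))
      = scaleC c (Pm (A (R a)) - scaleC \<mu> (R a))"
    using R_in_Dm[OF a]
    by (simp add: A_scaleC Dm_subset_DA P_simps complex_vector.scale_right_diff_distrib mult.commute)
  also have "\<dots> = scaleC c a"
    using A22_R[OF a] by simp
  finally have "Pm (A (scaleC c (R a))) - scaleC \<mu> (scaleC c (R a)) = scaleC c a" .
  then show "R (scaleC c a) = scaleC c (R a)"
    using R_A22 R_in_Dm[OF a] csubspace_scaleC[OF Dm(1)] by metis
qed

lemma F_in_Dm: "F x \<in> Dm"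
  by (rule R_in_Dm) simp

lemma diff_F_in_DA: "xp \<in> Dp \<Longrightarrow> xp - F xp \<in> DA"
  using csubspace_diff[OF csubspace_DA Dp_subset_DA Dm_subset_DA[OF F_in_Dm]] .

lemma JA_diff_F: "xp \<in> Dp \<Longrightarrow> J (A (xp - F xp)) = S xp + scaleC \<mu> (F xp)"
  using A22_R[of "Pm (A xp)"] Dm_subset_DA[OF F_in_Dm]
  by (simp add: A_diff Dp_subset_DA J_apply P_simps algebra_simps)

lemma cinner_S: "xp \<in> Dp \<Longrightarrow>
  cinner (S xp) xp = cinner (J (A (xp - F xp))) (xp - F xp) + \<mu> * cinner (F xp) (F xp)"
proof -
  assume xp: "xp \<in> Dp"
  have "F xp \<in> range Pm" "xp \<in> range Pp" using F_in_Dm Dm(2) xp Dp(2) by auto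
  then have "cinner (S xp) (F xp) = 0" "cinner (F xp) xp = 0"
    using cinner_Pp_range_Pm[of "F xp" "A xp - A (F xp)"] cinner_Pm_range_Pp[of xp "F xp"]
      Dm_proj(1)[OF F_in_Dm]
    by (simp_all add: P_simps)
  then show ?thesis
    unfolding JA_diff_F[OF xp] by (simp add: cinner_simps)
qed

lemma dissipative_S:
  assumes "dissipative (graph DA (\<lambda>x. J (A x)))" and "Re \<mu> < 0"
  shows "dissipative (graph Dp S)"
  unfolding dissipative_def graph_def
proof clarify
  fix xp assume xp: "xp \<in> Dp"
  have "Re (cinner (J (A (xp - F xp))) (xp - F xp)) \<le> 0"
    using dissipativeD[OF assms(1)] diff_F_in_DA[OF xp] by (simp add: mem_graph_iff)
  moreover have "Re (\<mu> * cinner (F xp) (F xp)) \<le> 0"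
    using assms(2) by (simp add: cinner_self_norm mult_nonpos_nonneg)
  ultimately show "Re (cinner (S xp) xp) \<le> 0"
    unfolding cinner_S[OF xp] by simp
qed

lemma S_in_range_Pp: "S x \<in> range Pp"
  by (metis orth_proj_diff[OF proj_p] rangeI)

lemma clinear_on_S: "clinear_on Dp S"
proof -
  have "clinear_on Dp (\<lambda>x. Pm (A x))"
    using A Dp_subset_DA
    by (auto simp: clinear_on_def P_simps A_add A_scaleC)
  then have "clinear_on Dp F"
    using clinear_on_R unfolding clinear_on_def by simp
  then show ?thesis
    using A Dp_subset_DA Dm_subset_DA[OF F_in_Dm]
    by (auto simp: clinear_on_def P_simps A_add A_scaleC complex_vector.scale_right_diff_distrib)
qed

lemma param_in_DA: "xp \<in> Dp \<Longrightarrow> g \<in> range Pm \<Longrightarrow> xp - F xp - R g \<in> DA"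
  using csubspace_diff[OF csubspace_DA diff_F_in_DA Dm_subset_DA[OF R_in_Dm]] .

lemma JA_param:
  assumes xp: "xp \<in> Dp" and g: "g \<in> range Pm"
  shows "J (A (xp - F xp - R g)) + scaleC \<mu> (xp - F xp - R g) = (S xp + scaleC \<mu> xp) - G g + g"
proof -
  have PmAF: "Pm (A (F xp)) = Pm (A xp) + scaleC \<mu> (F xp)"
    using A22_R[of "Pm (A xp)"] by (simp add: algebra_simps)
  have PmAR: "Pm (A (R g)) = g + scaleC \<mu> (R g)"
    using A22_R[OF g] by (simp add: algebra_simps)
  have A_eq: "A (xp - F xp - R g) = A xp - A (F xp) - A (R g)"
    using xp diff_F_in_DA Dp_subset_DA Dm_subset_DA[OF F_in_Dm] Dm_subset_DA[OF R_in_Dm[OF g]]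
    by (simp add: A_diff)
  show ?thesis
    unfolding J_apply A_eq by (simp add: P_simps PmAF PmAR algebra_simps complex_vector.scale_right_diff_distrib)
qed

lemma DA_param_cases:
  assumes "x \<in> DA"
  obtains xp g where "xp \<in> Dp" "g \<in> range Pm" "x = xp - F xp - R g"
proof -
  obtain xp xm where xp: "xp \<in> Dp" and xm: "xm \<in> Dm" and x: "x = xp + xm"
    using assms by (rule DA_cases)
  define v where "v = xp - F xp - x"
  have "v = scaleC (-1) (F xp + xm)" unfolding v_def x by simp
  then have v: "v \<in> Dm"
    using csubspace_scaleC[OF Dm(1) csubspace_add[OF Dm(1) F_in_Dm[of xp] xm], of "-1"] by simp
  define g where "g = Pm (A v) - scaleC \<mu> v"
  have "g = Pm (A v - scaleC \<mu> v)"
    unfolding g_def using Dm_proj(1)[OF v] by (simp add: P_simps)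
  then have "g \<in> range Pm" by simp
  moreover have "R g = v"
    unfolding g_def by (rule R_A22[OF v])
  then have "x = xp - F xp - R g"
    unfolding v_def by simp
  ultimately show ?thesis using that xp by blast
qed

lemma dense_range_JA_if_dense_range_S:
  assumes dense_S: "range Pp \<subseteq> closure ((\<lambda>x. S x + scaleC \<mu> x) ` Dp)"
  shows "closure ((\<lambda>x. J (A x) + scaleC \<mu> x) ` DA) = UNIV"
proof -
  have "w \<in> closure ((\<lambda>x. J (A x) + scaleC \<mu> x) ` DA)" for w
    unfolding closure_approachable
  proof (intro allI impI)
    fix e :: real assume "e > 0"
    define g t where "g = Pm w" and "t = Pp w + G g"
    have g: "g \<in> range Pm" unfolding g_def by simp
    have "t \<in> range Pp" unfolding t_def by (metis orth_proj_add[OF proj_p] rangeI)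
    then have "t \<in> closure ((\<lambda>x. S x + scaleC \<mu> x) ` Dp)" using dense_S by blast
    then obtain xp where xp: "xp \<in> Dp" and dist: "dist (S xp + scaleC \<mu> xp) t < e"
      using \<open>e > 0\<close> unfolding closure_approachable by auto
    have w: "Pp w + g = w" using compl unfolding g_def by simp
    have "J (A (xp - F xp - R g)) + scaleC \<mu> (xp - F xp - R g) - w
        = (S xp + scaleC \<mu> xp) - G g + g - (Pp w + g)"
      unfolding JA_param[OF xp g] w ..
    also have "\<dots> = (S xp + scaleC \<mu> xp) - t"
      unfolding t_def by (simp add: algebra_simps)
    finally have "dist (J (A (xp - F xp - R g)) + scaleC \<mu> (xp - F xp - R g)) w < e"
      using dist by (simp add: dist_norm)
    then show "\<exists>y\<in>(\<lambda>x. J (A x) + scaleC \<mu> x) ` DA. dist y w < e"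
      by (rule bexI[OF _ imageI[OF param_in_DA[OF xp g]]])
  qed
  then show ?thesis by blast
qed

text \<open>Since (JA + \<mu>)x - f = ((S + \<mu>)x+ - G g - f) + g is an orthogonal decomposition,
  both summands are controlled by the residual of JA + \<mu>.\<close>
lemma S_residual_le:
  assumes C: "\<forall>y\<in>range Pm. norm (G y) \<le> C * norm y"
    and xp: "xp \<in> Dp" and g: "g \<in> range Pm" and f: "f \<in> range Pp"
  shows "norm (S xp + scaleC \<mu> xp - f)
    \<le> (1 + \<bar>C\<bar>) * norm (J (A (xp - F xp - R g)) + scaleC \<mu> (xp - F xp - R g) - f)"
proof -
  define P where "P = S xp + scaleC \<mu> xp - G g - f"
  have "P = Pp (A xp - A (F xp) + scaleC \<mu> xp - A (R g) - f)"
    unfolding P_def using f Dp_proj(1)[OF xp] by (auto simp: P_simps)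
  then have "cinner P g = 0"
    using g cinner_Pp_range_Pm by simp
  moreover have res: "J (A (xp - F xp - R g)) + scaleC \<mu> (xp - F xp - R g) - f = P + g"
    unfolding JA_param[OF xp g] P_def by (simp add: algebra_simps)
  ultimately have "norm P \<le> norm (P + g)" "norm g \<le> norm (P + g)"
    using norm_le_norm_add_orthogonal by auto
  have "norm (G g) \<le> C * norm g" using C g by blast
  also have "\<dots> \<le> \<bar>C\<bar> * norm g" by (simp add: mult_right_mono)
  finally have G_le: "norm (G g) \<le> \<bar>C\<bar> * norm g" .
  have "norm (S xp + scaleC \<mu> xp - f) \<le> norm P + norm (G g)"
    using norm_triangle_ineq[of P "G g"] unfolding P_def by simp
  also have "\<dots> \<le> norm P + \<bar>C\<bar> * norm g"
    using G_le by simp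
  also have "\<dots> \<le> (1 + \<bar>C\<bar>) * norm (P + g)"
    using \<open>norm P \<le> norm (P + g)\<close> \<open>norm g \<le> norm (P + g)\<close>
      mult_left_mono[OF \<open>norm g \<le> norm (P + g)\<close> abs_ge_zero[of C]]
    by (simp add: distrib_right)
  finally show ?thesis unfolding res .
qed

lemma dense_range_S_if_dense_range_JA:
  assumes G_bounded: "\<exists>C. \<forall>y\<in>range Pm. norm (G y) \<le> C * norm y"
    and dense_JA: "closure ((\<lambda>x. J (A x) + scaleC \<mu> x) ` DA) = UNIV"
  shows "range Pp \<subseteq> closure ((\<lambda>x. S x + scaleC \<mu> x) ` Dp)"
proof
  fix f assume f: "f \<in> range Pp"
  obtain C where C: "\<forall>y\<in>range Pm. norm (G y) \<le> C * norm y"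
    using G_bounded by blast
  define K where "K = 1 + \<bar>C\<bar>"
  have "K > 0" unfolding K_def by simp
  show "f \<in> closure ((\<lambda>x. S x + scaleC \<mu> x) ` Dp)"
    unfolding closure_approachable
  proof (intro allI impI)
    fix e :: real assume "e > 0"
    have "f \<in> closure ((\<lambda>x. J (A x) + scaleC \<mu> x) ` DA)" using dense_JA by simp
    moreover have "e / K > 0" using \<open>e > 0\<close> \<open>K > 0\<close> by simp
    ultimately obtain x where "x \<in> DA" and x: "norm (J (A x) + scaleC \<mu> x - f) < e / K"
      unfolding closure_approachable dist_norm by auto
    obtain xp g where xp: "xp \<in> Dp" and g: "g \<in> range Pm" and x_eq: "x = xp - F xp - R g"
      using \<open>x \<in> DA\<close> by (rule DA_param_cases)
    have "norm (S xp + scaleC \<mu> xp - f) \<le> K * norm (J (A x) + scaleC \<mu> x - f)"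
      unfolding K_def x_eq by (rule S_residual_le[OF C xp g f])
    also have "\<dots> < e"
      using x \<open>K > 0\<close> by (simp add: field_simps)
    finally have "dist (S xp + scaleC \<mu> xp) f < e"
      by (simp add: dist_norm)
    then show "\<exists>y\<in>(\<lambda>x. S x + scaleC \<mu> x) ` Dp. dist y f < e"
      by (rule bexI[OF _ imageI[OF xp]])
  qed
qed

end

lemma (in block_operator) m_dissipative_closure_S_iff:
  assumes diss: "dissipative (graph DA (\<lambda>x. J (A x)))" and dense: "closure DA = UNIV"
    and m22: "m_dissipative_in (range Pm) (graph Dm (\<lambda>z. - Pm (A z)))" and \<mu>: "Re \<mu> < 0"
    and G_bounded: "\<exists>C. \<forall>y\<in>range Pm. norm (Pp (A (resolvent Dm (\<lambda>z. Pm (A z)) \<mu> y))) \<le> C * norm y"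
  shows "m_dissipative_in (range Pp)
           (closure (graph Dp (\<lambda>x. Pp (A x) - Pp (A (resolvent Dm (\<lambda>z. Pm (A z)) \<mu> (Pm (A x)))))))
    \<longleftrightarrow> m_dissipative_in UNIV {(x, J y) | x y. (x, y) \<in> closure (graph DA A)}"
proof -
  have "bij_betw (\<lambda>x. Pm (A x) - scaleC \<mu> x) Dm (range Pm)"
    using bij_betw_if_m_dissipative_minus[OF m22 closed_range_orth_proj[OF proj_m]
        csubspace_range_orth_proj[OF proj_m] range_Pm_subset_closure_Dm[OF dense] \<mu>] .
  then interpret M: block_operator_resolvent Pp Pm Dp Dm DA A J \<mu>
    by unfold_locales
  have l: "0 < Re (- \<mu>)" using \<mu> by simp
  have S_range: "x \<in> Dp \<Longrightarrow> M.S x \<in> range Pp" for x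
    by (rule M.S_in_range_Pp)
  have "m_dissipative_in (range Pp) (closure (graph Dp M.S))
      \<longleftrightarrow> range Pp \<subseteq> closure ((\<lambda>x. M.S x - scaleC (- \<mu>) x) ` Dp)"
    by (rule m_dissipative_closure_graph_iff[OF closed_range_orth_proj[OF proj_p]
          csubspace_range_orth_proj[OF proj_p] Dp range_Pp_subset_closure_Dp[OF dense]
          M.clinear_on_S S_range M.dissipative_S[OF diss \<mu>] l])
  also have "\<dots> \<longleftrightarrow> closure ((\<lambda>x. J (A x) + scaleC \<mu> x) ` DA) = UNIV"
    using M.dense_range_JA_if_dense_range_S M.dense_range_S_if_dense_range_JA[OF G_bounded]
    by auto
  also have "\<dots> \<longleftrightarrow> m_dissipative_in UNIV (closure (graph DA (\<lambda>x. J (A x))))"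
    using m_dissipative_closure_graph_iff[OF closed_UNIV csubspace_UNIV csubspace_DA subset_UNIV _
        clinear_on_JA _ diss l] dense
    by auto
  finally show ?thesis
    unfolding closure_graph_JA .
qed

theorem lemma2p5:
  fixes Pp Pm :: "'a::chilbert_space \<Rightarrow> 'a"
    and Dp Dm :: "'a set"
    and A :: "'a \<Rightarrow> 'a"
  defines "J \<equiv> (\<lambda>x. Pp x - Pm x)"
    and "DA \<equiv> {xp + xm | xp xm. xp \<in> Dp \<and> xm \<in> Dm}"
    and "F \<equiv> (\<lambda>\<mu> x. resolvent Dm (\<lambda>z. Pm (A z)) \<mu> (Pm (A x)))"
    and "G \<equiv> (\<lambda>\<mu> y. Pp (A (resolvent Dm (\<lambda>z. Pm (A z)) \<mu> y)))"
    and "S \<equiv> (\<lambda>\<mu> x. Pp (A x) - Pp (A (resolvent Dm (\<lambda>z. Pm (A z)) \<mu> (Pm (A x)))))"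
  assumes separable: "\<exists>Q::'a set. countable Q \<and> closure Q = UNIV"
    and proj_p: "orth_proj Pp" and proj_m: "orth_proj Pm"
    and compl: "\<forall>x. Pp x + Pm x = x"
    and Dp_sub: "csubspace Dp" "Dp \<subseteq> range Pp"
    and Dm_sub: "csubspace Dm" "Dm \<subseteq> range Pm"
    and A_lin: "clinear_on DA A"
  shows "(\<forall>\<mu> \<in> resolvent_set (range Pm) Dm (\<lambda>z. Pm (A z)). \<forall>xp\<in>Dp.
            xp - F \<mu> xp \<in> DA \<and>
            cinner (S \<mu> xp) xp
              = cinner (J (A (xp - F \<mu> xp))) (xp - F \<mu> xp) + \<mu> * cinner (F \<mu> xp) (F \<mu> xp))
       \<and> (dissipative (graph DA (\<lambda>x. J (A x))) \<longrightarrow>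
            (\<forall>\<mu> \<in> resolvent_set (range Pm) Dm (\<lambda>z. Pm (A z)). Re \<mu> < 0 \<longrightarrow>
               dissipative (graph Dp (S \<mu>))))
       \<and> (dissipative (graph DA (\<lambda>x. J (A x))) \<and> closure DA = UNIV \<and>
          m_dissipative_in (range Pm) (graph Dm (\<lambda>z. - Pm (A z))) \<longrightarrow>
            (\<forall>\<mu>. Re \<mu> < 0 \<and>
                 (\<exists>C. \<forall>x\<in>Dp. norm (F \<mu> x) \<le> C * norm x) \<and>
                 (\<exists>C. \<forall>y\<in>range Pm. norm (G \<mu> y) \<le> C * norm y) \<longrightarrow>
               (m_dissipative_in (range Pp) (closure (graph Dp (S \<mu>)))
                \<longleftrightarrow> m_dissipative_in UNIV {(x, J y) | x y. (x, y) \<in> closure (graph DA A)})))"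
proof -
  interpret block_operator Pp Pm Dp Dm DA A J
    using proj_p proj_m compl Dp_sub Dm_sub A_lin by unfold_locales (simp_all add: J_def DA_def)
  have resolvent: "block_operator_resolvent Pp Pm Dp Dm DA A J \<mu>"
    if "\<mu> \<in> resolvent_set (range Pm) Dm (\<lambda>z. Pm (A z))" for \<mu>
    using that by unfold_locales (simp add: resolvent_set_def)
  show ?thesis
    unfolding F_def G_def S_def
  proof (intro conjI ballI impI allI)
    fix \<mu> xp assume \<mu>: "\<mu> \<in> resolvent_set (range Pm) Dm (\<lambda>z. Pm (A z))" and xp: "xp \<in> Dp"
    interpret M: block_operator_resolvent Pp Pm Dp Dm DA A J \<mu> by (rule resolvent[OF \<mu>])
    show "xp - M.F xp \<in> DA" by (rule M.diff_F_in_DA[OF xp])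
    show "cinner (M.S xp) xp = cinner (J (A (xp - M.F xp))) (xp - M.F xp) + \<mu> * cinner (M.F xp) (M.F xp)"
      by (rule M.cinner_S[OF xp])
  next
    fix \<mu> assume "dissipative (graph DA (\<lambda>x. J (A x)))" "Re \<mu> < 0"
      and \<mu>: "\<mu> \<in> resolvent_set (range Pm) Dm (\<lambda>z. Pm (A z))"
    interpret M: block_operator_resolvent Pp Pm Dp Dm DA A J \<mu> by (rule resolvent[OF \<mu>])
    show "dissipative (graph Dp M.S)"
      by (rule M.dissipative_S) fact+
  qed (use m_dissipative_closure_S_iff in blast)
qed

end
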